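(* Let $E$ be a finite set and $\mathcal{F}\subseteq 2^E$ a non-empty downward-closed set system that is not a matroid. Then there exist weights $w:E\to\mathbb{R}_{\ge 0}$ such that an optimal solution to the nominal problem $\max_{S\in\mathcal{F}} w(S)$ is not an optimal first-stage solution of the robust counterpart $$\max_{S\in\mathcal{F}}\ \min_{f\in E\cup\{\emptyset\}}\ \max_{\substack{e\in (E\setminus(S\cup\{f\}))\cup\{\emptyset\}\\ (S\setminus\{f\})\cup\{e\}\in\mathcal{F}}} w\big((S\setminus\{f\})\cup\{e\}\big).$$
   Context: Downward-closed: $X\in\mathcal{F}$, $X'\subseteq X$ imply $X'\in\mathcal{F}$. A non-empty downward-closed system is a matroid iff whenever $I,J\in\mathcal{F}$ with $|I|<|J|$ there is $g\in J\setminus I$ with $I\cup\{g\}\in\mathcal{F}$. $w(S)=\sum_{x\in S}w(x)$. In the robust counterpart, $f=\emptyset$ means no deletion and $e=\emptyset$ means no addition. *)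

theory Defs
  imports Complex_Main
begin

definition downward_closed :: "'a set set \<Rightarrow> bool" where
  "downward_closed \<F> \<longleftrightarrow> (\<forall>X\<in>\<F>. \<forall>X'. X' \<subseteq> X \<longrightarrow> X' \<in> \<F>)"

definition is_matroid :: "'a set set \<Rightarrow> bool" where
  "is_matroid \<F> \<longleftrightarrow> \<F> \<noteq> {} \<and> downward_closed \<F> \<and>
     (\<forall>I\<in>\<F>. \<forall>J\<in>\<F>. card I < card J \<longrightarrow> (\<exists>g\<in>J - I. insert g I \<in> \<F>))"

text \<open>Deletions f and additions e are options; None plays the role of the empty choice.\<close>
definition recourse_value ::
  "'a set \<Rightarrow> 'a set set \<Rightarrow> ('a \<Rightarrow> real) \<Rightarrow> 'a set \<Rightarrow> 'a option \<Rightarrow> real" where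
  "recourse_value E \<F> w S f =
     Max ((\<lambda>e. sum w ((S - set_option f) \<union> set_option e)) `
          {e \<in> insert None (Some ` (E - (S \<union> set_option f))).
             (S - set_option f) \<union> set_option e \<in> \<F>})"

definition robust_value :: "'a set \<Rightarrow> 'a set set \<Rightarrow> ('a \<Rightarrow> real) \<Rightarrow> 'a set \<Rightarrow> real" where
  "robust_value E \<F> w S = Min (recourse_value E \<F> w S ` insert None (Some ` E))"

definition nominal_optimal :: "'a set set \<Rightarrow> ('a \<Rightarrow> real) \<Rightarrow> 'a set \<Rightarrow> bool" where
  "nominal_optimal \<F> w S \<longleftrightarrow> S \<in> \<F> \<and> (\<forall>S'\<in>\<F>. sum w S' \<le> sum w S)"

definition robust_optimal :: "'a set \<Rightarrow> 'a set set \<Rightarrow> ('a \<Rightarrow> real) \<Rightarrow> 'a set \<Rightarrow> bool" where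
  "robust_optimal E \<F> w S \<longleftrightarrow> S \<in> \<F> \<and>
     (\<forall>S'\<in>\<F>. robust_value E \<F> w S' \<le> robust_value E \<F> w S)"

end

theory Submission
  imports Defs
begin

text \<open>
  A downward-closed system that is not a matroid already fails augmentation locally: there are
  \<open>Y\<close>, \<open>x\<close>, \<open>y\<^sub>1\<close>, \<open>y\<^sub>2\<close> with \<open>Y + x\<close> and \<open>Y + y\<^sub>1 + y\<^sub>2\<close> feasible but neither \<open>Y + x + y\<^sub>1\<close>
  nor \<open>Y + x + y\<^sub>2\<close>. Give weight 2 to \<open>Y\<close> and to \<open>x\<close>, weight 4 to \<open>y\<^sub>1\<close>, weight 1 to \<open>y\<^sub>2\<close> and 0
  elsewhere, and let \<open>k = |Y|\<close>. Then \<open>Y + y\<^sub>1 + y\<^sub>2\<close> is nominally optimal with value \<open>2k + 5\<close>,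
  but if the adversary deletes \<open>y\<^sub>1\<close> the only possible addition of positive weight would be \<open>x\<close>,
  which is infeasible, so its robust value is \<open>2k + 1\<close>. The smaller solution \<open>Y + y\<^sub>1\<close> instead
  keeps value at least \<open>2k + 2\<close>: after losing \<open>y\<^sub>1\<close> it can recover with \<open>x\<close>.
\<close>

lemma downward_closedD:
  "downward_closed \<F> \<Longrightarrow> A \<in> \<F> \<Longrightarrow> B \<subseteq> A \<Longrightarrow> B \<in> \<F>"
  unfolding downward_closed_def by blast

lemma augmentation_from_local_augmentation:
  assumes dc: "downward_closed \<F>"
    and local_aug: "\<And>Y x y\<^sub>1 y\<^sub>2. x \<notin> Y \<Longrightarrow> y\<^sub>1 \<notin> Y \<Longrightarrow> y\<^sub>2 \<notin> Y \<Longrightarrow> y\<^sub>1 \<noteq> y\<^sub>2 \<Longrightarrow>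
       x \<noteq> y\<^sub>1 \<Longrightarrow> x \<noteq> y\<^sub>2 \<Longrightarrow> insert x Y \<in> \<F> \<Longrightarrow> insert y\<^sub>1 (insert y\<^sub>2 Y) \<in> \<F> \<Longrightarrow>
       insert x (insert y\<^sub>1 Y) \<in> \<F> \<or> insert x (insert y\<^sub>2 Y) \<in> \<F>"
    and "I \<in> \<F>" "J \<in> \<F>" "finite I" "card I < card J"
  shows "\<exists>g\<in>J - I. insert g I \<in> \<F>"
  using assms(3-)
proof (induction "card (I - J)" arbitrary: I)
  case 0
  have "finite J" using "0.prems"(4) card.infinite by fastforce
  have "I \<subseteq> J" using "0.hyps" \<open>finite I\<close> by auto
  with "0.prems"(4) obtain g where g: "g \<in> J - I"
    by (metis Diff_eq_empty_iff card_mono \<open>finite J\<close> ex_in_conv leD subset_antisym)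
  with \<open>I \<subseteq> J\<close> have "insert g I \<subseteq> J" by blast
  with g show ?case using dc \<open>J \<in> \<F>\<close> by (blast intro: downward_closedD)
next
  case (Suc n)
  text \<open>Remove some \<open>x \<in> I - J\<close>, augment twice from \<open>J\<close> by induction, then put \<open>x\<close> back
    using the local property.\<close>
  obtain x where x: "x \<in> I - J" using Suc.hyps(2) by (metis card.empty ex_in_conv nat.distinct(1))
  define I' where "I' = I - {x}"
  have I'_in: "I' \<in> \<F>" unfolding I'_def using dc \<open>I \<in> \<F>\<close> by (blast intro: downward_closedD)
  have I: "I = insert x I'" and x_I': "x \<notin> I'" and "finite I'"
    using x \<open>finite I\<close> unfolding I'_def by auto
  have card_I': "card (insert x I') = Suc (card I')" using x_I' \<open>finite I'\<close> by simp
  have "I' - J = (I - J) - {x}" unfolding I'_def by auto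
  then have n: "n = card (I' - J)" using Suc.hyps(2) x \<open>finite I\<close> by simp
  obtain g where g: "g \<in> J - I'" and g_in: "insert g I' \<in> \<F>"
    using Suc.hyps(1)[OF n I'_in \<open>J \<in> \<F>\<close> \<open>finite I'\<close>] Suc.prems(4) card_I' I by auto
  have "n = card (insert g I' - J)" using n g by simp
  moreover have "card (insert g I') < card J"
    using g \<open>finite I'\<close> Suc.prems(4) card_I' I by simp
  ultimately obtain h where h: "h \<in> J - insert g I'" and "insert h (insert g I') \<in> \<F>"
    using Suc.hyps(1) g_in \<open>J \<in> \<F>\<close> \<open>finite I'\<close> by blast
  then have "insert g (insert h I') \<in> \<F>" by (simp add: insert_commute)
  with local_aug[of x I' g h] have "insert x (insert g I') \<in> \<F> \<or> insert x (insert h I') \<in> \<F>"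
    using x g h x_I' Suc.prems(1) I by auto
  then show ?case
  proof
    assume "insert x (insert g I') \<in> \<F>"
    with g x I show ?case by (intro bexI[of _ g]) (auto simp: insert_commute)
  next
    assume "insert x (insert h I') \<in> \<F>"
    with h x I show ?case by (intro bexI[of _ h]) (auto simp: insert_commute)
  qed
qed

lemma not_matroid_obtains_local_obstruction:
  assumes "\<F> \<noteq> {}" and dc: "downward_closed \<F>" and "\<not> is_matroid \<F>"
    and finite_members: "\<forall>A\<in>\<F>. finite A"
  obtains Y x y\<^sub>1 y\<^sub>2 where "x \<notin> Y" "y\<^sub>1 \<notin> Y" "y\<^sub>2 \<notin> Y" "y\<^sub>1 \<noteq> y\<^sub>2" "x \<noteq> y\<^sub>1" "x \<noteq> y\<^sub>2"
    "insert x Y \<in> \<F>" "insert y\<^sub>1 (insert y\<^sub>2 Y) \<in> \<F>"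
    "insert x (insert y\<^sub>1 Y) \<notin> \<F>" "insert x (insert y\<^sub>2 Y) \<notin> \<F>"
proof -
  obtain I J where I: "I \<in> \<F>" and J: "J \<in> \<F>" and "card I < card J"
    and no_augmentation: "\<not> (\<exists>g\<in>J - I. insert g I \<in> \<F>)"
    using assms(1-3) unfolding is_matroid_def by blast
  note obstruction = that
  show thesis
  proof (rule ccontr)
    assume "\<not> thesis"
    then have "insert x (insert y\<^sub>1 Y) \<in> \<F> \<or> insert x (insert y\<^sub>2 Y) \<in> \<F>"
      if "x \<notin> Y" "y\<^sub>1 \<notin> Y" "y\<^sub>2 \<notin> Y" "y\<^sub>1 \<noteq> y\<^sub>2" "x \<noteq> y\<^sub>1" "x \<noteq> y\<^sub>2"
        "insert x Y \<in> \<F>" "insert y\<^sub>1 (insert y\<^sub>2 Y) \<in> \<F>" for Y x y\<^sub>1 y\<^sub>2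
      using that obstruction[of x Y y\<^sub>1 y\<^sub>2] \<open>\<not> thesis\<close> by blast
    then have "\<exists>g\<in>J - I. insert g I \<in> \<F>"
      using augmentation_from_local_augmentation[OF dc _ I J] finite_members I \<open>card I < card J\<close>
      by blast
    with no_augmentation show False ..
  qed
qed

lemma robust_value_le_recourse_value:
  assumes "finite E" "f \<in> insert None (Some ` E)"
  shows "robust_value E \<F> w S \<le> recourse_value E \<F> w S f"
  unfolding robust_value_def using assms by (intro Min_le) auto

lemma robust_value_geI:
  assumes "finite E" "\<And>f. f \<in> insert None (Some ` E) \<Longrightarrow> c \<le> recourse_value E \<F> w S f"
  shows "c \<le> robust_value E \<F> w S"
  unfolding robust_value_def using assms by (subst Min_ge_iff) auto

lemma recourse_value_geI:
  assumes "finite E" "e \<in> insert None (Some ` (E - (S \<union> set_option f)))"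
    and "(S - set_option f) \<union> set_option e \<in> \<F>"
    and "c \<le> sum w ((S - set_option f) \<union> set_option e)"
  shows "c \<le> recourse_value E \<F> w S f"
  unfolding recourse_value_def using assms by (subst Max_ge_iff) auto

lemma recourse_value_leI:
  assumes "finite E" "S - set_option f \<in> \<F>"
    and "\<And>e. e \<in> insert None (Some ` (E - (S \<union> set_option f))) \<Longrightarrow>
           (S - set_option f) \<union> set_option e \<in> \<F> \<Longrightarrow> sum w ((S - set_option f) \<union> set_option e) \<le> c"
  shows "recourse_value E \<F> w S f \<le> c"
  unfolding recourse_value_def using assms by (subst Max_le_iff) auto

locale local_obstruction =
  fixes E :: "'a set" and \<F> :: "'a set set" and Y :: "'a set" and x y\<^sub>1 y\<^sub>2 :: 'a
  assumes finite_E: "finite E" and F_sub: "\<F> \<subseteq> Pow E" and dc: "downward_closed \<F>"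
    and x_Y: "x \<notin> Y" and y1_Y: "y\<^sub>1 \<notin> Y" and y2_Y: "y\<^sub>2 \<notin> Y"
    and y1_y2: "y\<^sub>1 \<noteq> y\<^sub>2" and x_y1: "x \<noteq> y\<^sub>1" and x_y2: "x \<noteq> y\<^sub>2"
    and x_in: "insert x Y \<in> \<F>" and y1_y2_in: "insert y\<^sub>1 (insert y\<^sub>2 Y) \<in> \<F>"
    and x_y1_notin: "insert x (insert y\<^sub>1 Y) \<notin> \<F>" and x_y2_notin: "insert x (insert y\<^sub>2 Y) \<notin> \<F>"
begin

definition weight :: "'a \<Rightarrow> real" where
  "weight v = (if v \<in> Y \<or> v = x then 2 else if v = y\<^sub>1 then 4 else if v = y\<^sub>2 then 1 else 0)"

lemma weight_nonneg: "0 \<le> weight v"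
  unfolding weight_def by simp

lemma finite_member: "A \<in> \<F> \<Longrightarrow> finite A"
  using F_sub finite_E finite_subset by blast

lemma finite_Y: "finite Y"
  using finite_member[OF x_in] by simp

lemma sum_weight:
  "finite T \<Longrightarrow> sum weight T = 2 * real (card (T \<inter> Y)) +
     (if x \<in> T then 2 else 0) + (if y\<^sub>1 \<in> T then 4 else 0) + (if y\<^sub>2 \<in> T then 1 else 0)"
proof (induction T rule: finite_induct)
  case (insert a T)
  then show ?case
    using x_Y y1_Y y2_Y x_y1 x_y2 y1_y2
    by (cases "a \<in> Y") (auto simp: weight_def card_insert_if Int_insert_left)
qed simp

lemma nominal_optimality: "nominal_optimal \<F> weight (insert y\<^sub>1 (insert y\<^sub>2 Y))"
  unfolding nominal_optimal_def
proof (intro conjI ballI y1_y2_in)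
  fix T assume T: "T \<in> \<F>"
  have optimum_value: "sum weight (insert y\<^sub>1 (insert y\<^sub>2 Y)) = 2 * card Y + 5"
    using sum_weight[of "insert y\<^sub>1 (insert y\<^sub>2 Y)"] finite_Y x_Y y1_Y y2_Y x_y1 x_y2 y1_y2
    by (simp add: Int_absorb1)
  have "card (T \<inter> Y) \<le> card Y" using finite_Y by (simp add: card_mono)
  show "sum weight T \<le> sum weight (insert y\<^sub>1 (insert y\<^sub>2 Y))"
  proof (cases "Y \<subseteq> T")
    case True
    then have "\<not> (x \<in> T \<and> y\<^sub>1 \<in> T)" "\<not> (x \<in> T \<and> y\<^sub>2 \<in> T)"
      using downward_closedD[OF dc T] x_y1_notin x_y2_notin by auto
    then show ?thesis
      using optimum_value sum_weight[OF finite_member[OF T]] \<open>card (T \<inter> Y) \<le> card Y\<close> by auto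
  next
    case False
    then have "card (T \<inter> Y) < card Y" using finite_Y by (intro psubset_card_mono) auto
    then show ?thesis using optimum_value sum_weight[OF finite_member[OF T]] by auto
  qed
qed

lemma robust_value_nominal_optimum:
  "robust_value E \<F> weight (insert y\<^sub>1 (insert y\<^sub>2 Y)) \<le> 2 * card Y + 1"
proof -
  let ?S = "insert y\<^sub>1 (insert y\<^sub>2 Y)"
  have rest: "?S - {y\<^sub>1} = insert y\<^sub>2 Y" using y1_y2 y1_Y by auto
  have "y\<^sub>1 \<in> E" using y1_y2_in F_sub by auto
  then have "robust_value E \<F> weight ?S \<le> recourse_value E \<F> weight ?S (Some y\<^sub>1)"
    by (intro robust_value_le_recourse_value[OF finite_E]) auto
  also have "\<dots> \<le> 2 * card Y + 1"
  proof (rule recourse_value_leI[OF finite_E])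
    show "?S - set_option (Some y\<^sub>1) \<in> \<F>"
      using downward_closedD[OF dc y1_y2_in] rest by auto
    fix e assume e: "e \<in> insert None (Some ` (E - (?S \<union> set_option (Some y\<^sub>1))))"
      and e_in: "(?S - set_option (Some y\<^sub>1)) \<union> set_option e \<in> \<F>"
    show "sum weight ((?S - set_option (Some y\<^sub>1)) \<union> set_option e) \<le> 2 * card Y + 1"
    proof (cases e)
      case None
      then show ?thesis
        using rest sum_weight[of "insert y\<^sub>2 Y"] finite_Y x_Y y1_Y y2_Y x_y2 y1_y2
        by (simp add: Int_absorb1)
    next
      case (Some v)
      text \<open>Adding \<open>x\<close> is infeasible, and every other addition has weight 0.\<close>
      have "v \<noteq> x" using Some e_in x_y2_notin rest by (auto simp: insert_commute)
      moreover have "v \<notin> Y" "v \<noteq> y\<^sub>1" "v \<noteq> y\<^sub>2" using Some e by auto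
      ultimately show ?thesis
        using Some rest sum_weight[of "insert v (insert y\<^sub>2 Y)"] finite_Y x_Y y1_Y y2_Y x_y2 y1_y2
        by (simp add: Int_absorb1)
    qed
  qed
  finally show ?thesis .
qed

lemma robust_value_smaller_solution:
  "2 * card Y + 2 \<le> robust_value E \<F> weight (insert y\<^sub>1 Y)"
proof (rule robust_value_geI[OF finite_E])
  let ?S = "insert y\<^sub>1 Y"
  fix f assume f: "f \<in> insert None (Some ` E)"
  show "2 * card Y + 2 \<le> recourse_value E \<F> weight ?S f"
  proof (cases "f = Some y\<^sub>1")
    case True
    have recovered: "(?S - set_option f) \<union> set_option (Some x) = insert x Y"
      using True y1_Y by auto
    show ?thesis
    proof (rule recourse_value_geI[OF finite_E, where e = "Some x"])
      show "Some x \<in> insert None (Some ` (E - (?S \<union> set_option f)))"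
        using True x_in F_sub x_Y x_y1 by auto
      show "(?S - set_option f) \<union> set_option (Some x) \<in> \<F>"
        unfolding recovered by (rule x_in)
      show "2 * card Y + 2 \<le> sum weight ((?S - set_option f) \<union> set_option (Some x))"
        unfolding recovered using sum_weight[of "insert x Y"] finite_Y x_Y x_y1 x_y2
        by (simp add: Int_absorb1)
    qed
  next
    case False
    have "2 * card Y + 2 \<le> sum weight (?S - set_option f)"
    proof (cases "\<exists>z\<in>Y. f = Some z")
      case True
      then obtain z where z: "z \<in> Y" "f = Some z" by blast
      then have "?S - set_option f = insert y\<^sub>1 (Y - {z})" using y1_Y by auto
      moreover have "insert y\<^sub>1 (Y - {z}) \<inter> Y = Y - {z}" using y1_Y by auto
      moreover have "card Y = Suc (card (Y - {z}))" using card_Suc_Diff1[OF finite_Y z(1)] by (rule sym)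
      ultimately show ?thesis
        using sum_weight[of "insert y\<^sub>1 (Y - {z})"] finite_Y x_Y y1_Y x_y1 y1_y2 by simp
    next
      case False
      then have "?S - set_option f = ?S" using \<open>f \<noteq> Some y\<^sub>1\<close> by (cases f) auto
      then show ?thesis
        using sum_weight[of ?S] finite_Y x_Y y1_Y x_y1 y1_y2 by (simp add: Int_absorb1)
    qed
    moreover have "?S - set_option f \<in> \<F>"
      by (rule downward_closedD[OF dc y1_y2_in]) auto
    ultimately show ?thesis
      by (intro recourse_value_geI[OF finite_E, where e = None]) auto
  qed
qed

lemma nominal_optimum_not_robust_optimal:
  "\<not> robust_optimal E \<F> weight (insert y\<^sub>1 (insert y\<^sub>2 Y))"
proof -
  have "insert y\<^sub>1 Y \<in> \<F>" using downward_closedD[OF dc y1_y2_in] by blast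
  with robust_value_nominal_optimum robust_value_smaller_solution show ?thesis
    unfolding robust_optimal_def by force
qed

end

theorem theorem2:
  fixes E :: "'a set" and \<F> :: "'a set set"
  assumes "finite E"
    and "\<F> \<subseteq> Pow E"
    and "\<F> \<noteq> {}"
    and "downward_closed \<F>"
    and "\<not> is_matroid \<F>"
  shows "\<exists>w :: 'a \<Rightarrow> real. (\<forall>x\<in>E. 0 \<le> w x) \<and>
           (\<exists>S. nominal_optimal \<F> w S \<and> \<not> robust_optimal E \<F> w S)"
proof -
  have "\<forall>A\<in>\<F>. finite A" using assms(1,2) finite_subset by blast
  then obtain Y x y\<^sub>1 y\<^sub>2 where "local_obstruction E \<F> Y x y\<^sub>1 y\<^sub>2"
    using not_matroid_obtains_local_obstruction[OF assms(3-5)] assms(1,2,4)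
    unfolding local_obstruction_def by metis
  then interpret local_obstruction E \<F> Y x y\<^sub>1 y\<^sub>2 .
  show ?thesis
    using weight_nonneg nominal_optimality nominal_optimum_not_robust_optimal by blast
qed

end
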